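(* Let $\mu$ be a nontrivial probability measure on $\partial\mathbb{D}$, $d\mu_t(\theta)=e^{2t\cos\theta}d\mu(\theta)/\int e^{2t\cos\theta}d\mu(\theta)$, and $\alpha_n(t)=\alpha_n(\mu_t)$. Let $\Theta=\Theta(\mu)$ and suppose $S=\{\theta\in(-\pi,\pi]:|\theta|<\Theta,\ e^{i\theta}\in\mathrm{supp}\,\mu\}$ is infinite. Number the points of $S$ as $\theta_0,\theta_1,\theta_2,\dots$ with $|\theta_0|\le|\theta_1|\le|\theta_2|\le\cdots$. Then, as $t\to\infty$: (i) if $|\theta_{j-1}|<|\theta_j|<|\theta_{j+1}|$ (for $j=0$: if $|\theta_0|<|\theta_1|$), then $\alpha_j(t)\to(-1)\prod_{k=0}^j(-e^{-i\theta_k})$; (ii) if $|\theta_j|=|\theta_{j+1}|$, then \[ \alpha_j(t)\to\Bigl[\prod_{k=0}^{j-1}(-e^{-i\theta_k})\Bigr]\bigl[a e^{-i\theta_j}+(1-a)e^{i\theta_j}\bigr],\qquad a=\frac{\beta_+}{\beta_++\beta_-}, \] where $\beta_\pm=\prod_{k=0}^{j-1}|e^{\pm i\theta_j}-e^{i\theta_k}|^2\,\mu(\{e^{\pm i\theta_j}\})$.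
   Context: A measure is nontrivial if its support is infinite. For a probability measure $\nu$ on $\partial\mathbb{D}$ with monic orthogonal polynomials $\Phi_n(z;\nu)$, the Verblunsky coefficients are $\alpha_n(\nu)=-\overline{\Phi_{n+1}(0;\nu)}$. $\sigma_{\mathrm{ess}}(\mu)$ is the set of non-isolated points of $\mathrm{supp}\,\mu$, and $\Theta(\mu)=\min\{|\theta|:\theta\in(-\pi,\pi],\ e^{i\theta}\in\sigma_{\mathrm{ess}}(\mu)\}$. The functions $\alpha_n(t)$ solve the Schur flow $\alpha_n'=(1-|\alpha_n|^2)(\alpha_{n+1}-\alpha_{n-1})$ with $\alpha_{-1}\equiv-1$. Empty products equal $1$. *)

theory Defs
  imports "HOL-Probability.Probability" "HOL-Computational_Algebra.Polynomial"
begin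

definition supp_meas :: "complex measure \<Rightarrow> complex set" where
  "supp_meas \<mu> = {z. \<forall>e>0. emeasure \<mu> (ball z e) > 0}"

definition ess_supp :: "complex measure \<Rightarrow> complex set" where
  "ess_supp \<mu> = {z \<in> supp_meas \<mu>. z islimpt supp_meas \<mu>}"

definition Theta :: "complex measure \<Rightarrow> real" where
  "Theta \<mu> = Inf {\<bar>\<theta>\<bar> | \<theta>. -pi < \<theta> \<and> \<theta> \<le> pi \<and> cis \<theta> \<in> ess_supp \<mu>}"

definition OPUC :: "complex measure \<Rightarrow> nat \<Rightarrow> complex poly" where
  "OPUC \<mu> n = (THE p. degree p = n \<and> lead_coeff p = 1 \<and>
      (\<forall>k<n. (\<integral>z. poly p z * cnj (z ^ k) \<partial>\<mu>) = 0))"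

definition verblunsky :: "complex measure \<Rightarrow> nat \<Rightarrow> complex" where
  "verblunsky \<mu> n = - cnj (poly (OPUC \<mu> (Suc n)) 0)"

text \<open>d mu_t = e^{2t cos theta} d mu / normalisation (cos theta = Re z on the circle).\<close>
definition exp_tilt :: "complex measure \<Rightarrow> real \<Rightarrow> complex measure" where
  "exp_tilt \<mu> t = density \<mu> (\<lambda>z. ennreal (exp (2 * t * Re z) / (\<integral>x. exp (2 * t * Re x) \<partial>\<mu>)))"

end

theory Submission
  imports Defs
begin

(* As t tends to infinity, mu_t concentrates on the atoms e^(i theta_k) closest to 1, with weights
   e^(2t cos theta_k) mu{e^(i theta_k)}; the points of supp mu inside the arc |theta| < Theta are
   isolated, hence atoms.  Phi_(j+1)(.; mu_t) minimises the integral of e^(2t cos theta) |P|^2 dmu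
   over monic P of degree j+1.  Testing this against polynomials that vanish at the first nodes
   shows that Phi_(j+1) tends to 0 at every node e^(i theta_k) with |theta_k| < |theta_(j+1)|.
   In case (i) these are j+1 nodes, and Lagrange interpolation gives
   Phi_(j+1) -> prod_(k<=j) (z - e^(i theta_k)).  In case (ii) only the first j nodes are, and
   Phi_(j+1) = q (z - c_t) + (Phi_(j+1) mod q) with q = prod_(k<j) (z - e^(i theta_k)).  The extremal
   property at the two equally weighted nodes e^(+-i theta_j) forces c_t towards the minimiser of
   beta_+ |e^(i theta_j) - c|^2 + beta_- |e^(-i theta_j) - c|^2, the weighted barycentre of the two. *)

lemma zero_or_degree_less:
  assumes "\<forall>i\<ge>n. coeff p i = 0"
  shows "p = 0 \<or> degree p < n"
  using assms degree_lessI[of p n] by auto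

lemma monic_diff_zero_or_degree_less:
  assumes "degree p = n" "degree q = n" "lead_coeff p = 1" "lead_coeff q = 1"
  shows "p - q = 0 \<or> degree (p - q) < n"
proof (rule zero_or_degree_less, intro allI impI)
  fix i assume "i \<ge> n"
  then show "coeff (p - q) i = 0"
    using assms by (cases "i = n") (auto simp: coeff_eq_0)
qed

lemma monic_monom_diff:
  fixes h :: "'a::comm_ring_1 poly"
  assumes "h = 0 \<or> degree h < n"
  shows "degree (monom 1 n - h) = n" "lead_coeff (monom 1 n - h) = 1"
proof -
  have lead: "coeff (monom 1 n - h) n = 1"
    using assms by (auto simp: coeff_eq_0)
  have "degree (monom 1 n - h) \<le> n"
    using assms by (intro degree_le) (auto simp: coeff_eq_0)
  moreover have "n \<le> degree (monom 1 n - h)"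
    using lead by (intro le_degree) simp
  ultimately show deg: "degree (monom 1 n - h) = n" by simp
  show "lead_coeff (monom 1 n - h) = 1" using deg lead by simp
qed

lemma monic_linear_factors:
  fixes x :: "nat \<Rightarrow> 'a::field"
  assumes "finite A"
  shows "degree (\<Prod>k\<in>A. [:- x k, 1:]) = card A" "lead_coeff (\<Prod>k\<in>A. [:- x k, 1:]) = 1"
proof -
  have "degree (\<Prod>k\<in>A. [:- x k, 1:]) = (\<Sum>k\<in>A. degree [:- x k, 1:])"
    by (rule degree_prod_eq_sum_degree) auto
  then show "degree (\<Prod>k\<in>A. [:- x k, 1:]) = card A" by simp
  show "lead_coeff (\<Prod>k\<in>A. [:- x k, 1:]) = 1" by (simp add: lead_coeff_prod)
qed

lemma monic_div_eq_linear_factor: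
  fixes p q :: "'a::field poly"
  assumes "degree p = Suc (degree q)" "lead_coeff p = 1" "lead_coeff q = 1"
  obtains c where "p = q * [:- c, 1:] + p mod q"
proof -
  define d where "d = p div q"
  have "q \<noteq> 0" using assms(3) by auto
  have dq: "d * q = p + - (p mod q)" by (simp add: d_def minus_mod_eq_div_mult)
  have mod_small: "degree (- (p mod q)) < degree p"
    using degree_mod_less[OF \<open>q \<noteq> 0\<close>, of p] assms(1) by auto
  have "degree (d * q) = degree p" "lead_coeff (d * q) = 1"
    unfolding dq using degree_add_eq_left[OF mod_small] lead_coeff_add_le[OF mod_small] assms(2)
    by (simp_all add: add.commute)
  moreover have "d \<noteq> 0" using calculation assms(1) by auto
  ultimately have "degree d = 1" "lead_coeff d = 1"
    using assms \<open>q \<noteq> 0\<close> lead_coeff_mult[of d q] by (simp_all add: degree_mult_eq)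
  then obtain b where "d = [:b, 1:]"
    by (elim degree1_coeffs) simp
  then show ?thesis using that[of "- b"] div_mult_mod_eq[of p q] by (simp add: d_def mult.commute)
qed

lemma poly_lagrange_interpolation:
  fixes x :: "nat \<Rightarrow> 'a::field" and e :: "'a poly"
  assumes inj: "inj_on x {..<m}" and deg: "e = 0 \<or> degree e < m"
  shows "poly e y = (\<Sum>k<m. poly e (x k) * (\<Prod>i\<in>{..<m}-{k}. (y - x i) / (x k - x i)))"
proof (cases "e = 0")
  case False
  then have deg: "degree e < m" using deg by simp
  define L where "L = (\<Sum>k<m. smult (poly e (x k) / (\<Prod>i\<in>{..<m}-{k}. (x k - x i)))
                               (\<Prod>i\<in>{..<m}-{k}. [:- x i, 1:]))"
  have poly_L: "poly L z = (\<Sum>k<m. poly e (x k) * (\<Prod>i\<in>{..<m}-{k}. (z - x i) / (x k - x i)))" for z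
    unfolding L_def poly_sum poly_smult poly_prod
    by (intro sum.cong refl) (simp add: prod_dividef)
  have "degree L \<le> m - 1"
    unfolding L_def
  proof (intro degree_sum_le)
    fix k assume "k \<in> {..<m}"
    have "degree (\<Prod>i\<in>{..<m}-{k}. [:- x i, 1:]) = m - 1"
      using monic_linear_factors(1)[of "{..<m}-{k}" x] \<open>k \<in> {..<m}\<close> by simp
    then show "degree (smult (poly e (x k) / (\<Prod>i\<in>{..<m}-{k}. (x k - x i)))
                               (\<Prod>i\<in>{..<m}-{k}. [:- x i, 1:])) \<le> m - 1"
      using degree_smult_le by metis
  qed auto
  have L_nodes: "poly L (x j) = poly e (x j)" if j: "j < m" for j
  proof -
    have "poly L (x j) = poly e (x j) * (\<Prod>i\<in>{..<m}-{j}. (x j - x i) / (x j - x i))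
        + (\<Sum>k\<in>{..<m}-{j}. poly e (x k) * (\<Prod>i\<in>{..<m}-{k}. (x j - x i) / (x k - x i)))"
      unfolding poly_L by (rule sum.remove) (use j in auto)
    also have "(\<Sum>k\<in>{..<m}-{j}. poly e (x k) * (\<Prod>i\<in>{..<m}-{k}. (x j - x i) / (x k - x i))) = 0"
      using j by (intro sum.neutral ballI) (auto intro: prod_zero)
    also have "(\<Prod>i\<in>{..<m}-{j}. (x j - x i) / (x j - x i)) = 1"
      using inj j by (intro prod.neutral ballI) (auto dest: inj_onD)
    finally show ?thesis by simp
  qed
  have "e = L"
  proof (rule poly_eqI_degree[of "x ` {..<m}"])
    show "card (x ` {..<m}) > degree e" "card (x ` {..<m}) > degree L"
      using card_image[OF inj] deg \<open>degree L \<le> m - 1\<close> by simp_all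
  qed (auto simp: L_nodes)
  then show ?thesis using poly_L[of y] by simp
qed simp

lemma poly_tendsto_0_of_nodes:
  fixes x :: "nat \<Rightarrow> 'a::real_normed_field" and e :: "'t \<Rightarrow> 'a poly"
  assumes "inj_on x {..<m}" and "\<And>t. e t = 0 \<or> degree (e t) < m"
    and "\<And>k. k < m \<Longrightarrow> ((\<lambda>t. poly (e t) (x k)) \<longlongrightarrow> 0) F"
  shows "((\<lambda>t. poly (e t) y) \<longlongrightarrow> 0) F"
proof -
  have "((\<lambda>t. \<Sum>k<m. poly (e t) (x k) * (\<Prod>i\<in>{..<m}-{k}. (y - x i) / (x k - x i))) \<longlongrightarrow> 0) F"
    by (intro tendsto_null_sum tendsto_mult_left_zero assms(3)) auto
  then show ?thesis by (subst poly_lagrange_interpolation[OF assms(1,2)])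
qed

definition coeff_norm_sum :: "'a::real_normed_field poly \<Rightarrow> real" where
  "coeff_norm_sum p = (\<Sum>i\<le>degree p. norm (coeff p i))"

lemma coeff_norm_sum_nonneg: "coeff_norm_sum p \<ge> 0"
  unfolding coeff_norm_sum_def by (simp add: sum_nonneg)

lemma norm_poly_le_coeff_norm_sum:
  fixes p :: "'a::real_normed_field poly"
  assumes "norm z = 1"
  shows "norm (poly p z) \<le> coeff_norm_sum p"
proof -
  have "norm (poly p z) = norm (\<Sum>i\<le>degree p. coeff p i * z ^ i)" by (simp add: poly_altdef)
  also have "\<dots> \<le> (\<Sum>i\<le>degree p. norm (coeff p i * z ^ i))" by (rule norm_sum)
  also have "\<dots> = coeff_norm_sum p" using assms by (simp add: coeff_norm_sum_def norm_mult norm_power)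
  finally show ?thesis .
qed

lemma tendsto_exp_neg_mult_at_top:
  fixes a :: real
  assumes "a < 0"
  shows "((\<lambda>t. exp (a * t)) \<longlongrightarrow> 0) at_top"
proof -
  have "filterlim (\<lambda>t. a * t) at_bot at_top"
    using filterlim_tendsto_neg_mult_at_bot[OF tendsto_const assms filterlim_ident] .
  then show ?thesis by (rule filterlim_compose[OF exp_at_bot])
qed

lemma tendsto_0_of_norm_sq_le:
  fixes f :: "'t \<Rightarrow> 'a::real_normed_vector"
  assumes "\<forall>\<^sub>F t in F. (norm (f t))\<^sup>2 \<le> g t" and "(g \<longlongrightarrow> 0) F"
  shows "(f \<longlongrightarrow> 0) F"
proof -
  have "((\<lambda>t. (norm (f t))\<^sup>2) \<longlongrightarrow> 0) F"
    by (rule tendsto_sandwich[of "\<lambda>_. 0" _ F g]) (use assms in auto)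
  then have "((\<lambda>t. sqrt ((norm (f t))\<^sup>2)) \<longlongrightarrow> sqrt 0) F"
    by (rule tendsto_real_sqrt)
  then show ?thesis by (simp add: tendsto_norm_zero_iff)
qed

lemma weighted_parallel_axis:
  fixes a b y :: complex and p q :: real
  assumes "p + q > 0"
  defines "c \<equiv> (of_real p * a + of_real q * b) / of_real (p + q)"
  shows "p * (cmod (a - y))\<^sup>2 + q * (cmod (b - y))\<^sup>2
       = p * (cmod (a - c))\<^sup>2 + q * (cmod (b - c))\<^sup>2 + (p + q) * (cmod (y - c))\<^sup>2"
proof -
  have "of_real (p + q) * c = of_real p * a + of_real q * b"
    using assms(1) unfolding c_def by (simp del: of_real_add)
  from arg_cong[OF this, of Re] arg_cong[OF this, of Im]
  have re: "(p + q) * Re c = p * Re a + q * Re b" and im: "(p + q) * Im c = p * Im a + q * Im b"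
    by simp_all
  have "p * (u - w)\<^sup>2 + q * (v - w)\<^sup>2 = p * (u - r)\<^sup>2 + q * (v - r)\<^sup>2 + (p + q) * (w - r)\<^sup>2"
    if "(p + q) * r = p * u + q * v" for u v w r :: real
  proof -
    have "p * (u - w)\<^sup>2 + q * (v - w)\<^sup>2 - (p * (u - r)\<^sup>2 + q * (v - r)\<^sup>2 + (p + q) * (w - r)\<^sup>2)
          = 2 * (r - w) * ((p * u + q * v) - (p + q) * r)"
      by (simp add: power2_eq_square algebra_simps)
    then show ?thesis using that by simp
  qed
  from this[OF re, of "Re y"] this[OF im, of "Im y"] show ?thesis
    unfolding cmod_power2 by (simp add: algebra_simps)
qed

lemma tendsto_weighted_barycenter:
  fixes a b c :: complex and x e d :: "'t \<Rightarrow> complex" and \<epsilon> :: "'t \<Rightarrow> real" and p q :: real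
  assumes "p > 0" "q > 0" and c: "c = (of_real p * a + of_real q * b) / of_real (p + q)"
    and bound: "\<forall>\<^sub>F t in F. p * (cmod (a - x t + e t))\<^sup>2 + q * (cmod (b - x t + d t))\<^sup>2
                  \<le> p * (cmod (a - c))\<^sup>2 + q * (cmod (b - c))\<^sup>2 + \<epsilon> t"
    and "(e \<longlongrightarrow> 0) F" "(d \<longlongrightarrow> 0) F" "(\<epsilon> \<longlongrightarrow> 0) F"
  shows "(x \<longlongrightarrow> c) F"
proof -
  text \<open>By the parallel axis identity
    \<open>N (a - x) (b - x)\<^sup>2 = K + (p + q) |x - c|\<^sup>2\<close>, and the triangle inequality for \<open>N\<close> absorbs
    the perturbations \<open>e\<close> and \<open>d\<close>.\<close>
  define N where "N u v = norm (complex_of_real (sqrt p) * u, complex_of_real (sqrt q) * v)" for u v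
  have N_sq: "(N u v)\<^sup>2 = p * (cmod u)\<^sup>2 + q * (cmod v)\<^sup>2" for u v
    using assms(1,2) by (simp add: N_def norm_Pair norm_mult power_mult_distrib)
  have N_triangle: "N (u + u') (v + v') \<le> N u v + N u' v'" for u v u' v'
    using norm_triangle_ineq[of "(complex_of_real (sqrt p) * u, complex_of_real (sqrt q) * v)"
        "(complex_of_real (sqrt p) * u', complex_of_real (sqrt q) * v')"]
    by (simp add: N_def algebra_simps)
  define K where "K = p * (cmod (a - c))\<^sup>2 + q * (cmod (b - c))\<^sup>2"
  have "K \<ge> 0" using assms(1,2) by (simp add: K_def)
  define g where "g t = ((sqrt (K + \<epsilon> t) + N (e t) (d t))\<^sup>2 - K) / (p + q)" for t
  have "\<forall>\<^sub>F t in F. (cmod (x t - c))\<^sup>2 \<le> g t"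
    using bound
  proof eventually_elim
    case (elim t)
    have "N (a - x t + e t) (b - x t + d t) \<le> sqrt (K + \<epsilon> t)"
      using elim by (simp add: K_def real_le_rsqrt N_sq)
    moreover have "N (a - x t) (b - x t) \<le> N (a - x t + e t) (b - x t + d t) + N (e t) (d t)"
      using N_triangle[of "a - x t + e t" "- e t" "b - x t + d t" "- d t"]
      by (simp add: N_def norm_Pair)
    ultimately have "(N (a - x t) (b - x t))\<^sup>2 \<le> (sqrt (K + \<epsilon> t) + N (e t) (d t))\<^sup>2"
      by (intro power_mono) (auto simp: N_def)
    moreover have "(N (a - x t) (b - x t))\<^sup>2 = K + (p + q) * (cmod (x t - c))\<^sup>2"
      unfolding N_sq K_def c using weighted_parallel_axis[where y = "x t"] assms(1,2) by simp
    ultimately show ?case using assms(1,2) by (simp add: g_def pos_le_divide_eq mult.commute)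
  qed
  moreover have "(g \<longlongrightarrow> ((sqrt (K + 0) + N 0 0)\<^sup>2 - K) / (p + q)) F"
    unfolding g_def N_def using assms(1,2) by (intro tendsto_intros assms) auto
  then have "(g \<longlongrightarrow> 0) F" using \<open>K \<ge> 0\<close> by (simp add: N_def)
  ultimately have "((\<lambda>t. x t - c) \<longlongrightarrow> 0) F" by (rule tendsto_0_of_norm_sq_le)
  then show ?thesis by (rule LIM_zero_cancel)
qed

lemma AE_at_atom:
  assumes "AE x in M. P x" "measure M {z} > 0"
  shows "P z"
proof (rule ccontr)
  assume "\<not> P z"
  from assms(1) obtain N where N: "{x \<in> space M. \<not> P x} \<subseteq> N" "N \<in> null_sets M"
    by (auto elim!: AE_E)
  have "emeasure M {z} \<noteq> 0" using assms(2) by (auto simp: measure_def)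
  then have "{z} \<in> sets M" using emeasure_notin_sets by blast
  then have "{z} \<subseteq> N" using N(1) \<open>\<not> P z\<close> sets.sets_into_space by blast
  then have "{z} \<in> null_sets M" using N(2) \<open>{z} \<in> sets M\<close> null_sets_subset by blast
  then show False using \<open>emeasure M {z} \<noteq> 0\<close> by auto
qed

lemma sum_indicator_singleton:
  assumes "finite A"
  shows "(\<Sum>z\<in>A. g z * indicator {z} x) = (if x \<in> A then g x else (0::real))"
proof -
  have "(\<Sum>z\<in>A. g z * indicator {z} x) = (\<Sum>z\<in>A. if z = x then g z else 0)"
    by (intro sum.cong refl) (auto simp: indicator_def)
  also have "\<dots> = (if x \<in> A then g x else 0)" using assms by simp
  finally show ?thesis .
qed

context finite_measure
begin

lemma integral_sum_atoms:
  assumes "\<And>z. z \<in> A \<Longrightarrow> {z} \<in> sets M" "finite A"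
  shows "integrable M (\<lambda>x. \<Sum>z\<in>A. g z * indicator {z} x)"
    and "(\<integral>x. (\<Sum>z\<in>A. g z * indicator {z} x) \<partial>M) = (\<Sum>z\<in>A. g z * measure M {z})"
proof -
  have int: "integrable M (\<lambda>x. g z * indicator {z} x)" if "z \<in> A" for z
    using assms(1)[OF that] by (intro integrable_mult_right integrable_real_indicator)
      (auto simp: less_top[symmetric])
  then show "integrable M (\<lambda>x. \<Sum>z\<in>A. g z * indicator {z} x)" by auto
  show "(\<integral>x. (\<Sum>z\<in>A. g z * indicator {z} x) \<partial>M) = (\<Sum>z\<in>A. g z * measure M {z})"
    using int assms(1) by (subst Bochner_Integration.integral_sum) auto
qed

lemma sum_atoms_le_integral:
  assumes "\<And>z. z \<in> A \<Longrightarrow> {z} \<in> sets M" "finite A"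
    and "integrable M g" "\<And>x. g x \<ge> 0"
  shows "(\<Sum>z\<in>A. g z * measure M {z}) \<le> integral\<^sup>L M g"
proof -
  have "(\<Sum>z\<in>A. g z * measure M {z}) = (\<integral>x. (\<Sum>z\<in>A. g z * indicator {z} x) \<partial>M)"
    using integral_sum_atoms[OF assms(1,2)] by simp
  also have "\<dots> \<le> integral\<^sup>L M g"
    using integral_sum_atoms(1)[OF assms(1,2)] assms(3,4)
    by (intro integral_mono) (auto simp: sum_indicator_singleton[OF assms(2)])
  finally show ?thesis .
qed

lemma integral_le_sum_atoms_plus:
  assumes "\<And>z. z \<in> A \<Longrightarrow> {z} \<in> sets M" "finite A"
    and "integrable M g" "AE x in M. x \<in> A \<or> g x \<le> B" "\<And>x. g x \<ge> 0" "B \<ge> 0"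
  shows "integral\<^sup>L M g \<le> (\<Sum>z\<in>A. g z * measure M {z}) + B * measure M (space M)"
proof -
  have "integral\<^sup>L M g \<le> (\<integral>x. (\<Sum>z\<in>A. g z * indicator {z} x) + B \<partial>M)"
  proof (rule integral_mono_AE)
    show "integrable M (\<lambda>x. (\<Sum>z\<in>A. g z * indicator {z} x) + B)"
      using integral_sum_atoms[OF assms(1,2)] by auto
    show "AE x in M. g x \<le> (\<Sum>z\<in>A. g z * indicator {z} x) + B"
      using assms(4) by eventually_elim (use assms(5,6) in \<open>auto simp: sum_indicator_singleton[OF assms(2)]\<close>)
  qed fact
  also have "\<dots> = (\<Sum>z\<in>A. g z * measure M {z}) + B * measure M (space M)"
    using integral_sum_atoms[OF assms(1,2)] by simp
  finally show ?thesis .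
qed

end

lemma borel_measurable_continuous_sets_borel:
  assumes "sets M = sets borel" "continuous_on UNIV f"
  shows "f \<in> borel_measurable M"
  using measurable_cong_sets[OF assms(1) refl] borel_measurable_continuous_onI[OF assms(2)] by blast

lemma integrable_bounded_continuous_on_circle:
  fixes f :: "complex \<Rightarrow> 'b::{banach, second_countable_topology}"
  assumes "finite_measure M" "sets M = sets borel" "AE z in M. cmod z = 1"
    and "continuous_on UNIV f" "\<And>z. cmod z = 1 \<Longrightarrow> norm (f z) \<le> B"
  shows "integrable M f"
proof -
  interpret finite_measure M by fact
  show ?thesis
    using assms(3,5) borel_measurable_continuous_sets_borel[OF assms(2,4)]
    by (intro integrable_const_bound[where B = B]) auto
qed

lemma AE_not_in_of_disjoint_supp:
  assumes "sets \<mu> = sets (borel :: complex measure)" "A \<inter> supp_meas \<mu> = {}"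
  shows "AE x in \<mu>. x \<notin> A"
proof -
  define F where "F = {ball x e | x e. e > 0 \<and> emeasure \<mu> (ball x e) = 0}"
  obtain F' where F': "F' \<subseteq> F" "countable F'" "\<Union>F' = \<Union>F"
    using Lindelof[of F] by (auto simp: F_def)
  have "A \<subseteq> \<Union>F"
  proof
    fix x assume "x \<in> A"
    then have "x \<notin> supp_meas \<mu>" using assms(2) by auto
    then obtain e where "e > 0" "emeasure \<mu> (ball x e) = 0"
      by (auto simp: supp_meas_def)
    then have "ball x e \<in> F" "x \<in> ball x e" unfolding F_def by auto
    then show "x \<in> \<Union>F" by blast
  qed
  moreover have "(\<Union>S\<in>F'. S) \<in> null_sets \<mu>"
  proof (rule null_sets_UN')
    fix S assume "S \<in> F'"
    then obtain x e where "S = ball x e" "emeasure \<mu> (ball x e) = 0" using F' unfolding F_def by blast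
    then show "S \<in> null_sets \<mu>" using assms(1) by auto
  qed fact
  ultimately show ?thesis using F'(3) by (intro AE_I') auto
qed

section \<open>Monic orthogonal polynomials on the unit circle\<close>

locale opuc_measure = finite_measure M for M :: "complex measure" +
  assumes sets_M: "sets M = sets borel"
    and AE_unit_circle: "AE z in M. cmod z = 1"
    and infinite_atoms: "infinite {z. measure M {z} > 0}"
begin

definition pinner :: "complex poly \<Rightarrow> complex poly \<Rightarrow> complex" where
  "pinner p q = (\<integral>z. poly p z * cnj (poly q z) \<partial>M)"

definition psqnorm :: "complex poly \<Rightarrow> real" where
  "psqnorm p = (\<integral>z. (cmod (poly p z))\<^sup>2 \<partial>M)"

definition orth_lower :: "nat \<Rightarrow> complex poly \<Rightarrow> bool" where
  "orth_lower n p \<longleftrightarrow> (\<forall>q. degree q < n \<longrightarrow> pinner p q = 0)"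

lemma integrable_bounded_on_circle:
  fixes f :: "complex \<Rightarrow> 'b::{banach, second_countable_topology}"
  assumes "continuous_on UNIV f" "\<And>z. cmod z = 1 \<Longrightarrow> norm (f z) \<le> B"
  shows "integrable M f"
  using integrable_bounded_continuous_on_circle[OF finite_measure_axioms sets_M AE_unit_circle assms] .

lemma integrable_poly_mult_cnj: "integrable M (\<lambda>z. poly p z * cnj (poly q z))"
proof (rule integrable_bounded_on_circle)
  fix z :: complex assume "cmod z = 1"
  then show "norm (poly p z * cnj (poly q z))
          \<le> coeff_norm_sum p * coeff_norm_sum q"
    unfolding norm_mult complex_mod_cnj
    by (intro mult_mono norm_poly_le_coeff_norm_sum) (auto intro: coeff_norm_sum_nonneg)
qed (intro continuous_intros)

lemma integrable_poly_sq: "integrable M (\<lambda>z. (cmod (poly p z))\<^sup>2)"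
proof (rule integrable_bounded_on_circle)
  fix z :: complex assume "cmod z = 1"
  then show "norm ((cmod (poly p z))\<^sup>2) \<le> (coeff_norm_sum p)\<^sup>2"
    using norm_poly_le_coeff_norm_sum[of z p] by (simp add: power_mono)
qed (intro continuous_intros)

lemma psqnorm_nonneg: "psqnorm p \<ge> 0"
  unfolding psqnorm_def by (rule integral_nonneg_AE) auto

lemma pinner_self: "pinner p p = of_real (psqnorm p)"
proof -
  have "pinner p p = (\<integral>z. complex_of_real ((cmod (poly p z))\<^sup>2) \<partial>M)"
    unfolding pinner_def by (intro Bochner_Integration.integral_cong refl) (rule complex_norm_square[symmetric])
  also have "\<dots> = of_real (psqnorm p)"
    unfolding psqnorm_def by (rule integral_complex_of_real)
  finally show ?thesis .
qed

lemma pinner_diff_left: "pinner (p - q) r = pinner p r - pinner q r"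
  unfolding pinner_def by (simp add: left_diff_distrib integrable_poly_mult_cnj)

lemma pinner_smult_left: "pinner (smult a p) r = a * pinner p r"
  unfolding pinner_def by (simp add: mult.assoc)

lemma pinner_commute: "pinner q p = cnj (pinner p q)"
  unfolding pinner_def by (subst Bochner_Integration.integral_cnj[symmetric]) (simp add: mult.commute)

lemma pinner_add_left: "pinner (p + q) r = pinner p r + pinner q r"
  unfolding pinner_def by (simp add: distrib_right integrable_poly_mult_cnj)

lemma pinner_add_right: "pinner r (p + q) = pinner r p + pinner r q"
  by (metis pinner_commute pinner_add_left complex_cnj_add)

lemma pinner_diff_right: "pinner r (p - q) = pinner r p - pinner r q"
  by (metis pinner_commute pinner_diff_left complex_cnj_diff)

lemma pinner_smult_right: "pinner r (smult a p) = cnj a * pinner r p"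
  by (metis pinner_commute pinner_smult_left complex_cnj_mult)

text \<open>Definiteness is where the infinitely many atoms are needed: a polynomial vanishing
  almost everywhere vanishes at every atom.\<close>
lemma psqnorm_eq_0D: "psqnorm p = 0 \<Longrightarrow> p = 0"
proof (rule ccontr)
  assume "psqnorm p = 0" "p \<noteq> 0"
  have "AE z in M. (cmod (poly p z))\<^sup>2 = 0"
    using \<open>psqnorm p = 0\<close> unfolding psqnorm_def
    by (subst (asm) integral_nonneg_eq_0_iff_AE) (auto intro: integrable_poly_sq)
  then have "{z. measure M {z} > 0} \<subseteq> {z. poly p z = 0}"
    by (auto dest: AE_at_atom)
  then show False
    using poly_roots_finite[OF \<open>p \<noteq> 0\<close>] infinite_atoms finite_subset by blast
qed

lemma orth_lower_pinner: "orth_lower n p \<Longrightarrow> q = 0 \<or> degree q < n \<Longrightarrow> pinner p q = 0"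
  unfolding orth_lower_def pinner_def by auto

lemma orth_lower_projection_exists: "\<exists>g. (g = 0 \<or> degree g < n) \<and> orth_lower n (f - g)"
proof (induction n arbitrary: f)
  case 0
  show ?case by (auto simp: orth_lower_def)
next
  case (Suc n)
  obtain h where h: "h = 0 \<or> degree h < n" "orth_lower n (monom 1 n - h)"
    using Suc.IH by blast
  define \<Phi> where "\<Phi> = monom 1 n - h"
  have deg_\<Phi>: "degree \<Phi> = n" and lead_\<Phi>: "lead_coeff \<Phi> = 1"
    unfolding \<Phi>_def using monic_monom_diff[OF h(1)] by auto
  have "pinner \<Phi> \<Phi> \<noteq> 0"
    using psqnorm_eq_0D[of \<Phi>] lead_\<Phi> by (auto simp: pinner_self)
  obtain g0 where g0: "g0 = 0 \<or> degree g0 < n" "orth_lower n (f - g0)"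
    using Suc.IH by blast
  define c where "c = pinner (f - g0) \<Phi> / pinner \<Phi> \<Phi>"
  define g where "g = g0 + smult c \<Phi>"
  have "degree g < Suc n"
    using degree_add_le_max[of g0 "smult c \<Phi>"] g0(1) deg_\<Phi> degree_smult_le[of c \<Phi>]
    by (auto simp: g_def)
  moreover have "orth_lower (Suc n) (f - g)"
    unfolding orth_lower_def
  proof (intro allI impI)
    fix q :: "complex poly" assume "degree q < Suc n"
    define a where "a = coeff q n"
    have small: "q - smult a \<Phi> = 0 \<or> degree (q - smult a \<Phi>) < n"
      using \<open>degree q < Suc n\<close> deg_\<Phi> lead_\<Phi>
      by (intro zero_or_degree_less) (auto simp: a_def coeff_eq_0 le_less)
    have "pinner (f - g0) q = cnj a * pinner (f - g0) \<Phi>"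
      using orth_lower_pinner[OF g0(2) small] by (simp add: pinner_diff_right pinner_smult_right)
    moreover have "pinner \<Phi> q = cnj a * pinner \<Phi> \<Phi>"
      using orth_lower_pinner[OF h(2) small] by (simp add: \<Phi>_def pinner_diff_right pinner_smult_right)
    moreover have "pinner (f - g) q = pinner (f - g0) q - c * pinner \<Phi> q"
      by (simp add: g_def diff_add_eq_diff_diff_swap pinner_diff_left pinner_smult_left)
    ultimately show "pinner (f - g) q = 0"
      using \<open>pinner \<Phi> \<Phi> \<noteq> 0\<close> by (simp add: c_def)
  qed
  ultimately show ?case by blast
qed

lemma orth_lower_of_monomials:
  assumes "\<forall>k<n. (\<integral>z. poly p z * cnj (z ^ k) \<partial>M) = 0"
  shows "orth_lower n p"
  unfolding orth_lower_def
proof (intro allI impI)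
  fix q :: "complex poly" assume "degree q < n"
  have "pinner p q = (\<integral>z. (\<Sum>i\<le>degree q. cnj (coeff q i) * (poly p z * cnj (z ^ i))) \<partial>M)"
    unfolding pinner_def poly_altdef[of q]
    by (intro Bochner_Integration.integral_cong refl) (simp add: sum_distrib_left mult_ac)
  also have "\<dots> = (\<Sum>i\<le>degree q. cnj (coeff q i) * (\<integral>z. poly p z * cnj (z ^ i) \<partial>M))"
  proof -
    have "integrable M (\<lambda>z. cnj (coeff q i) * (poly p z * cnj (z ^ i)))" for i
      using integrable_poly_mult_cnj[of p "monom 1 i"] by (simp add: poly_monom)
    then show ?thesis by (subst Bochner_Integration.integral_sum) auto
  qed
  also have "\<dots> = 0" using assms \<open>degree q < n\<close> by (intro sum.neutral) auto
  finally show "pinner p q = 0" .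
qed

lemma monic_orth_lower_unique:
  assumes "degree p = n" "lead_coeff p = 1" "orth_lower n p"
    and "degree q = n" "lead_coeff q = 1" "orth_lower n q"
  shows "p = q"
proof -
  have small: "p - q = 0 \<or> degree (p - q) < n"
    using monic_diff_zero_or_degree_less assms(1,2,4,5) by blast
  have "pinner (p - q) (p - q) = 0"
    using orth_lower_pinner[OF assms(3) small] orth_lower_pinner[OF assms(6) small]
    by (simp add: pinner_diff_left)
  then show ?thesis using psqnorm_eq_0D[of "p - q"] by (simp add: pinner_self)
qed

lemma OPUC_characterization:
  "degree (OPUC M n) = n \<and> lead_coeff (OPUC M n) = 1 \<and> orth_lower n (OPUC M n)"
proof -
  obtain g where g: "g = 0 \<or> degree g < n" "orth_lower n (monom 1 n - g)"
    using orth_lower_projection_exists by blast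
  define \<Phi> where "\<Phi> = monom 1 n - g"
  have deg: "degree \<Phi> = n" and lead: "lead_coeff \<Phi> = 1" and orth: "orth_lower n \<Phi>"
    unfolding \<Phi>_def using monic_monom_diff[OF g(1)] g(2) by auto
  have "(\<integral>z. poly \<Phi> z * cnj (z ^ k) \<partial>M) = 0" if "k < n" for k
    using orth_lower_pinner[OF orth, of "monom 1 k"] that
    by (simp add: pinner_def poly_monom degree_monom_eq)
  moreover have "p = \<Phi>"
    if "degree p = n \<and> lead_coeff p = 1 \<and> (\<forall>k<n. (\<integral>z. poly p z * cnj (z ^ k) \<partial>M) = 0)" for p
    using that orth_lower_of_monomials[of n p] monic_orth_lower_unique[of p n \<Phi>] deg lead orth
    by blast
  ultimately have "OPUC M n = \<Phi>"
    unfolding OPUC_def using deg lead by (intro the_equality) auto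
  then show ?thesis using deg lead orth by simp
qed

lemma psqnorm_OPUC_le:
  assumes "degree P = n" "lead_coeff P = 1"
  shows "psqnorm (OPUC M n) \<le> psqnorm P"
proof -
  let ?\<Phi> = "OPUC M n"
  have small: "P - ?\<Phi> = 0 \<or> degree (P - ?\<Phi>) < n"
    using monic_diff_zero_or_degree_less assms OPUC_characterization by blast
  have orth: "pinner ?\<Phi> (P - ?\<Phi>) = 0" "pinner (P - ?\<Phi>) ?\<Phi> = 0"
    using orth_lower_pinner[OF _ small] OPUC_characterization pinner_commute[of "P - ?\<Phi>" ?\<Phi>] by auto
  have "pinner (?\<Phi> + (P - ?\<Phi>)) (?\<Phi> + (P - ?\<Phi>)) = pinner ?\<Phi> ?\<Phi> + pinner (P - ?\<Phi>) (P - ?\<Phi>)"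
    unfolding pinner_add_left pinner_add_right using orth by simp
  then have "pinner P P = pinner ?\<Phi> ?\<Phi> + pinner (P - ?\<Phi>) (P - ?\<Phi>)" by simp
  then have "psqnorm P = psqnorm ?\<Phi> + psqnorm (P - ?\<Phi>)"
    by (simp add: pinner_self flip: of_real_add)
  then show ?thesis using psqnorm_nonneg[of "P - ?\<Phi>"] by linarith
qed

end

section \<open>The support of \<open>\<mu>\<close> inside the arc \<open>|\<theta>| < \<Theta>\<close>\<close>

lemma unit_circle_Arg:
  assumes "cmod x = 1"
  shows "x = cis (Arg x)" "-pi < Arg x" "Arg x \<le> pi" "Re x = cos \<bar>Arg x\<bar>"
proof -
  have "x \<noteq> 0" using assms by auto
  then have "cis (Arg x) = sgn x" by (rule cis_Arg)
  also have "sgn x = x" using assms by (simp add: sgn_div_norm)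
  finally show x: "x = cis (Arg x)" by simp
  have "Re x = cos (Arg x)" by (subst x) simp
  then show "Re x = cos \<bar>Arg x\<bar>" by simp
  show "-pi < Arg x" "Arg x \<le> pi" by (rule mpi_less_Arg, rule Arg_le_pi)
qed

locale inner_support_enumeration =
  fixes \<mu> :: "complex measure" and \<theta> :: "nat \<Rightarrow> real"
  assumes prob: "prob_space \<mu>" and sets_\<mu>: "sets \<mu> = sets borel"
    and on_circle: "emeasure \<mu> (sphere 0 1) = 1"
    and bij: "bij_betw \<theta> UNIV {\<phi>. -pi < \<phi> \<and> \<phi> \<le> pi \<and> \<bar>\<phi>\<bar> < Theta \<mu> \<and> cis \<phi> \<in> supp_meas \<mu>}"
    and mono_abs: "mono (\<lambda>k. \<bar>\<theta> k\<bar>)"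
begin

abbreviation node :: "nat \<Rightarrow> complex" where "node k \<equiv> cis (\<theta> k)"

abbreviation mass :: "nat \<Rightarrow> real" where "mass k \<equiv> measure \<mu> {node k}"

lemma theta_in_range: "-pi < \<theta> k" "\<theta> k \<le> pi" "\<bar>\<theta> k\<bar> < Theta \<mu>" "node k \<in> supp_meas \<mu>"
  using bij_betwE[OF bij] by auto

lemma inj_theta: "inj \<theta>"
  using bij by (simp add: bij_betw_def)

lemma theta_surj:
  assumes "-pi < \<phi>" "\<phi> \<le> pi" "\<bar>\<phi>\<bar> < Theta \<mu>" "cis \<phi> \<in> supp_meas \<mu>"
  obtains k where "\<theta> k = \<phi>"
proof -
  have "\<phi> \<in> range \<theta>" using assms bij by (simp add: bij_betw_def)
  then show ?thesis using that by blast
qed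

lemma abs_theta_mono: "k \<le> l \<Longrightarrow> \<bar>\<theta> k\<bar> \<le> \<bar>\<theta> l\<bar>"
  using mono_abs by (auto dest: monoD)

lemma less_of_abs_theta_less: "\<bar>\<theta> k\<bar> < \<bar>\<theta> l\<bar> \<Longrightarrow> k < l"
  using abs_theta_mono[of l k] by (cases "k < l") auto

lemma cos_theta_less: "\<bar>\<theta> k\<bar> < \<bar>\<theta> l\<bar> \<Longrightarrow> cos (\<theta> l) < cos (\<theta> k)"
  using cos_mono_less_eq[of "\<bar>\<theta> l\<bar>" "\<bar>\<theta> k\<bar>"] theta_in_range(1,2)[of k] theta_in_range(1,2)[of l]
  by simp

lemma inj_node: "inj node"
proof (rule injI)
  fix k l assume "node k = node l"
  then have "Arg (node k) = Arg (node l)" by simp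
  then have "\<theta> k = \<theta> l" using theta_in_range[of k] theta_in_range[of l] by (simp add: Arg_cis)
  then show "k = l" using inj_theta by (simp add: inj_eq)
qed

text \<open>At most two angles share the same modulus, \<open>\<theta>\<close> and \<open>-\<theta>\<close>.\<close>
lemma abs_theta_less_Suc_Suc: "\<bar>\<theta> k\<bar> < \<bar>\<theta> (Suc (Suc k))\<bar>"
proof (rule ccontr)
  assume "\<not> ?thesis"
  then have "\<bar>\<theta> (Suc (Suc k))\<bar> = \<bar>\<theta> k\<bar>" "\<bar>\<theta> (Suc k)\<bar> = \<bar>\<theta> k\<bar>"
    using abs_theta_mono[of k "Suc k"] abs_theta_mono[of "Suc k" "Suc (Suc k)"] by simp_all
  moreover have "\<theta> (Suc k) \<noteq> \<theta> k" "\<theta> (Suc (Suc k)) \<noteq> \<theta> k" "\<theta> (Suc (Suc k)) \<noteq> \<theta> (Suc k)"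
    using inj_theta by (auto dest: injD)
  ultimately show False by (auto simp: abs_if split: if_splits)
qed

lemma AE_unit_circle: "AE x in \<mu>. cmod x = 1"
proof -
  interpret prob_space \<mu> by (rule prob)
  have "sphere 0 1 \<in> sets \<mu>" by (simp add: sets_\<mu>)
  then have "AE x in \<mu>. x \<in> sphere 0 1"
    using on_circle by (subst prob_space.AE_in_set_eq_1) (auto simp: emeasure_eq_measure prob)
  then show ?thesis by simp
qed

lemma AE_node_or_below: "AE x in \<mu>. cmod x = 1 \<and> (x \<in> node ` {..<N} \<or> Re x \<le> cos (\<theta> N))"
proof -
  define A where "A = {x. cmod x = 1 \<and> x \<notin> node ` {..<N} \<and> Re x > cos (\<theta> N)}"
  have "A \<inter> supp_meas \<mu> = {}"
  proof (rule ccontr)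
    assume "A \<inter> supp_meas \<mu> \<noteq> {}"
    then obtain x where "x \<in> A" "x \<in> supp_meas \<mu>" by blast
    then have Arg_x: "x = cis (Arg x)" "-pi < Arg x" "Arg x \<le> pi" "Re x = cos \<bar>Arg x\<bar>"
      using unit_circle_Arg[of x] by (auto simp: A_def)
    have "cos \<bar>Arg x\<bar> > cos \<bar>\<theta> N\<bar>" using \<open>x \<in> A\<close> Arg_x by (simp add: A_def)
    then have "\<bar>Arg x\<bar> < \<bar>\<theta> N\<bar>"
      using cos_mono_less_eq[of "\<bar>\<theta> N\<bar>" "\<bar>Arg x\<bar>"] theta_in_range(1,2)[of N] Arg_le_pi[of x]
        mpi_less_Arg[of x] by auto
    moreover obtain k where k: "\<theta> k = Arg x"
      using theta_surj[of "Arg x"] Arg_x \<open>x \<in> A\<close> \<open>x \<in> supp_meas \<mu>\<close> theta_in_range(3)[of N] calculation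
      by (auto simp: A_def)
    ultimately have "k < N" "x = node k"
      using less_of_abs_theta_less[of k N] Arg_x(1) by auto
    then have "x \<in> node ` {..<N}" by blast
    then show False using \<open>x \<in> A\<close> by (simp add: A_def)
  qed
  then have "AE x in \<mu>. x \<notin> A" by (rule AE_not_in_of_disjoint_supp[OF sets_\<mu>])
  then show ?thesis using AE_unit_circle by eventually_elim (auto simp: A_def)
qed

lemma mass_pos: "mass k > 0"
proof -
  define N where "N = Suc (Suc k)"
  define C where "C = {x. Re x \<le> cos (\<theta> N)} \<union> (node ` {..<N} - {node k})"
  have "closed C" unfolding C_def by (intro closed_Un closed_halfspace_Re_le finite_imp_closed) auto
  moreover have "node k \<notin> C"
    using cos_theta_less[OF abs_theta_less_Suc_Suc[of k]] by (simp add: C_def N_def)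
  ultimately obtain e where e: "e > 0" "ball (node k) e \<subseteq> - C"
    using open_contains_ball[of "- C"] by (auto simp: closed_def)
  have "AE x in \<mu>. x \<in> ball (node k) e \<longleftrightarrow> x \<in> {node k}"
    using AE_node_or_below[of N] by eventually_elim (use e in \<open>auto simp: C_def\<close>)
  then have "emeasure \<mu> (ball (node k) e) = emeasure \<mu> {node k}"
    by (rule emeasure_eq_AE) (auto simp: sets_\<mu>)
  moreover have "emeasure \<mu> (ball (node k) e) > 0"
    using theta_in_range(4)[of k] e(1) by (simp add: supp_meas_def)
  ultimately show ?thesis
    using finite_measure.emeasure_eq_measure[OF prob_space.axioms(1)[OF prob]] by simp
qed

section \<open>The tilted measures\<close>

definition tilt_normalizer :: "real \<Rightarrow> real" where
  "tilt_normalizer t = (\<integral>x. exp (2 * t * Re x) \<partial>\<mu>)"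

definition tilted_energy :: "real \<Rightarrow> complex poly \<Rightarrow> real" where
  "tilted_energy t p = (\<integral>x. exp (2 * t * Re x) * (cmod (poly p x))\<^sup>2 \<partial>\<mu>)"

abbreviation Phi :: "real \<Rightarrow> nat \<Rightarrow> complex poly" where
  "Phi t n \<equiv> OPUC (exp_tilt \<mu> t) n"

lemma finite_measure_\<mu>: "finite_measure \<mu>"
  using prob by (simp add: prob_space_def)

lemma integrable_tilted_energy: "integrable \<mu> (\<lambda>x. exp (2 * t * Re x) * (cmod (poly p x))\<^sup>2)"
proof (rule integrable_bounded_continuous_on_circle[OF finite_measure_\<mu> sets_\<mu> AE_unit_circle])
  fix x :: complex assume "cmod x = 1"
  then have "\<bar>Re x\<bar> \<le> 1" using abs_Re_le_cmod[of x] by simp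
  then have "\<bar>t * Re x\<bar> \<le> \<bar>t\<bar>" by (simp add: abs_mult mult_left_le)
  then have "t * Re x \<le> \<bar>t\<bar>" by linarith
  moreover have "(cmod (poly p x))\<^sup>2 \<le> (coeff_norm_sum p)\<^sup>2"
    using norm_poly_le_coeff_norm_sum[OF \<open>cmod x = 1\<close>] by (simp add: power_mono)
  ultimately show "norm (exp (2 * t * Re x) * (cmod (poly p x))\<^sup>2) \<le> exp (2 * \<bar>t\<bar>) * (coeff_norm_sum p)\<^sup>2"
    by (simp add: abs_mult) (intro mult_mono; simp)
qed (intro continuous_intros)

lemma tilted_energy_1: "tilted_energy t 1 = tilt_normalizer t"
  by (simp add: tilted_energy_def tilt_normalizer_def)

lemma sum_nodes_le_tilted_energy:
  "(\<Sum>k<N. exp (2 * t * cos (\<theta> k)) * (cmod (poly p (node k)))\<^sup>2 * mass k) \<le> tilted_energy t p"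
proof -
  have "(\<Sum>z\<in>node ` {..<N}. exp (2 * t * Re z) * (cmod (poly p z))\<^sup>2 * measure \<mu> {z}) \<le> tilted_energy t p"
    unfolding tilted_energy_def using sets_\<mu> integrable_tilted_energy
    by (intro finite_measure.sum_atoms_le_integral[OF finite_measure_\<mu>]) auto
  then show ?thesis
    by (simp add: sum.reindex[OF inj_on_subset[OF inj_node subset_UNIV]])
qed

lemma tilt_normalizer_pos: "tilt_normalizer t > 0"
proof -
  have "exp (2 * t * cos (\<theta> 0)) * mass 0 > 0" using mass_pos by simp
  also have "\<dots> \<le> tilt_normalizer t"
    using sum_nodes_le_tilted_energy[where N = 1 and p = 1] by (simp add: tilted_energy_1)
  finally show ?thesis .
qed

lemma tilted_energy_le_sum_nodes:
  assumes "t \<ge> 0"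
  shows "tilted_energy t p \<le> (\<Sum>k<N. exp (2 * t * cos (\<theta> k)) * (cmod (poly p (node k)))\<^sup>2 * mass k)
                          + (coeff_norm_sum p)\<^sup>2 * exp (2 * t * cos (\<theta> N))"
proof -
  let ?g = "\<lambda>x. exp (2 * t * Re x) * (cmod (poly p x))\<^sup>2"
  have "AE x in \<mu>. x \<in> node ` {..<N} \<or> ?g x \<le> (coeff_norm_sum p)\<^sup>2 * exp (2 * t * cos (\<theta> N))"
    using AE_node_or_below[of N]
  proof eventually_elim
    case (elim x)
    then have "(cmod (poly p x))\<^sup>2 \<le> (coeff_norm_sum p)\<^sup>2"
      using norm_poly_le_coeff_norm_sum[of x p] by (simp add: power_mono)
    moreover have "x \<notin> node ` {..<N} \<Longrightarrow> exp (2 * t * Re x) \<le> exp (2 * t * cos (\<theta> N))"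
      using elim assms by (simp add: mult_left_mono)
    ultimately show ?case by (auto simp: mult.commute intro: mult_mono)
  qed
  then have "tilted_energy t p \<le> (\<Sum>z\<in>node ` {..<N}. ?g z * measure \<mu> {z})
                                 + (coeff_norm_sum p)\<^sup>2 * exp (2 * t * cos (\<theta> N)) * measure \<mu> (space \<mu>)"
    unfolding tilted_energy_def using sets_\<mu> integrable_tilted_energy
    by (intro finite_measure.integral_le_sum_atoms_plus[OF finite_measure_\<mu>]) auto
  then show ?thesis
    by (simp add: sum.reindex[OF inj_on_subset[OF inj_node subset_UNIV]] prob_space.prob_space[OF prob])
qed

lemma borel_measurable_tilt:
  "(\<lambda>x. exp (2 * t * Re x) / c) \<in> borel_measurable \<mu>"
  "(\<lambda>x. ennreal (exp (2 * t * Re x) / c)) \<in> borel_measurable \<mu>"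
proof -
  show meas: "(\<lambda>x. exp (2 * t * Re x) / c) \<in> borel_measurable \<mu>"
    unfolding divide_inverse
    by (rule borel_measurable_continuous_sets_borel[OF sets_\<mu>]) (intro continuous_intros)
  show "(\<lambda>x. ennreal (exp (2 * t * Re x) / c)) \<in> borel_measurable \<mu>"
    using measurable_compose[OF meas measurable_ennreal] by (simp add: o_def)
qed

lemma exp_tilt_eq_density:
  "exp_tilt \<mu> t = density \<mu> (\<lambda>x. ennreal (exp (2 * t * Re x) / tilt_normalizer t))"
  by (simp add: exp_tilt_def tilt_normalizer_def)

lemma measure_exp_tilt_singleton:
  "measure (exp_tilt \<mu> t) {z} = exp (2 * t * Re z) / tilt_normalizer t * measure \<mu> {z}"
proof -
  interpret finite_measure \<mu> by (rule finite_measure_\<mu>)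
  have "emeasure (exp_tilt \<mu> t) {z}
      = (\<integral>\<^sup>+ x. ennreal (exp (2 * t * Re x) / tilt_normalizer t) * indicator {z} x \<partial>\<mu>)"
    unfolding exp_tilt_eq_density by (rule emeasure_density[OF borel_measurable_tilt(2)]) (simp add: sets_\<mu>)
  also have "\<dots> = ennreal (exp (2 * t * Re z) / tilt_normalizer t) * ennreal (measure \<mu> {z})"
    by (subst nn_integral_indicator_singleton) (auto simp: sets_\<mu> emeasure_eq_measure)
  also have "\<dots> = ennreal (exp (2 * t * Re z) / tilt_normalizer t * measure \<mu> {z})"
    using tilt_normalizer_pos[of t] by (intro ennreal_mult[symmetric]) auto
  finally show ?thesis using tilt_normalizer_pos[of t] by (simp add: measure_def)
qed

lemma opuc_measure_exp_tilt: "opuc_measure (exp_tilt \<mu> t)"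
proof -
  interpret finite_measure \<mu> by (rule finite_measure_\<mu>)
  let ?g = "\<lambda>x. exp (2 * t * Re x) / tilt_normalizer t"
  have "integrable \<mu> ?g" using integrable_tilted_energy[of t 1] by simp
  have "emeasure (exp_tilt \<mu> t) (space (exp_tilt \<mu> t))
      = (\<integral>\<^sup>+ x. ennreal (?g x) * indicator (space \<mu>) x \<partial>\<mu>)"
    unfolding exp_tilt_eq_density space_density by (rule emeasure_density[OF borel_measurable_tilt(2)]) simp
  also have "\<dots> = (\<integral>\<^sup>+ x. ennreal (?g x) \<partial>\<mu>)"
    by (intro nn_integral_cong) simp
  also have "\<dots> = ennreal (integral\<^sup>L \<mu> ?g)"
    using tilt_normalizer_pos[of t] by (intro nn_integral_eq_integral \<open>integrable \<mu> ?g\<close>) auto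
  finally have "finite_measure (exp_tilt \<mu> t)" by (intro finite_measureI) simp
  moreover have "range node \<subseteq> {z. measure (exp_tilt \<mu> t) {z} > 0}"
    using mass_pos tilt_normalizer_pos[of t] by (auto simp: measure_exp_tilt_singleton)
  then have "infinite {z. measure (exp_tilt \<mu> t) {z} > 0}"
    using range_inj_infinite[OF inj_node] infinite_super by blast
  moreover have "AE z in exp_tilt \<mu> t. cmod z = 1"
    unfolding exp_tilt_eq_density
    by (subst AE_density[OF borel_measurable_tilt(2)]) (use AE_unit_circle in auto)
  ultimately show ?thesis
    by (intro opuc_measure.intro opuc_measure_axioms.intro) (auto simp: exp_tilt_eq_density sets_\<mu>)
qed

lemma psqnorm_exp_tilt:
  "opuc_measure.psqnorm (exp_tilt \<mu> t) p = tilted_energy t p / tilt_normalizer t"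
proof -
  have "opuc_measure.psqnorm (exp_tilt \<mu> t) p = (\<integral>x. (cmod (poly p x))\<^sup>2 \<partial>(exp_tilt \<mu> t))"
    using opuc_measure.psqnorm_def[OF opuc_measure_exp_tilt] by simp
  also have "\<dots> = (\<integral>x. (exp (2 * t * Re x) / tilt_normalizer t) *\<^sub>R (cmod (poly p x))\<^sup>2 \<partial>\<mu>)"
    unfolding exp_tilt_eq_density using tilt_normalizer_pos[of t] borel_measurable_tilt
    by (intro integral_density borel_measurable_continuous_sets_borel[OF sets_\<mu>] continuous_intros) auto
  also have "\<dots> = tilted_energy t p / tilt_normalizer t"
    by (simp add: tilted_energy_def)
  finally show ?thesis .
qed

lemma tilted_energy_OPUC_le:
  assumes "degree P = n" "lead_coeff P = 1"
  shows "tilted_energy t (Phi t n) \<le> tilted_energy t P"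
  using opuc_measure.psqnorm_OPUC_le[OF opuc_measure_exp_tilt assms, of t] tilt_normalizer_pos[of t]
  by (simp add: psqnorm_exp_tilt divide_le_cancel)

lemma degree_Phi: "degree (Phi t n) = n" and lead_coeff_Phi: "lead_coeff (Phi t n) = 1"
  using opuc_measure.OPUC_characterization[OF opuc_measure_exp_tilt] by blast+

lemma tilted_OPUC_sum_nodes_le:
  assumes "t \<ge> 0" "degree P = n" "lead_coeff P = 1"
  shows "(\<Sum>k<N. exp (2 * t * cos (\<theta> k)) * (cmod (poly (Phi t n) (node k)))\<^sup>2 * mass k)
    \<le> (\<Sum>k<N. exp (2 * t * cos (\<theta> k)) * (cmod (poly P (node k)))\<^sup>2 * mass k)
       + (coeff_norm_sum P)\<^sup>2 * exp (2 * t * cos (\<theta> N))"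
  by (rule order_trans[OF sum_nodes_le_tilted_energy
        order_trans[OF tilted_energy_OPUC_le[OF assms(2,3)] tilted_energy_le_sum_nodes[OF assms(1)]]])

section \<open>Asymptotics of the tilted orthogonal polynomials\<close>

lemma tilted_OPUC_tendsto_0_at_node:
  assumes "degree P = n" "lead_coeff P = 1" "\<And>i. i < N \<Longrightarrow> poly P (node i) = 0"
    and "k < N" "\<bar>\<theta> k\<bar> < \<bar>\<theta> N\<bar>"
  shows "((\<lambda>t. poly (Phi t n) (node k)) \<longlongrightarrow> 0) at_top"
proof (rule tendsto_0_of_norm_sq_le)
  define a where "a = 2 * (cos (\<theta> N) - cos (\<theta> k))"
  define B where "B = (coeff_norm_sum P)\<^sup>2 / mass k"
  show "\<forall>\<^sub>F t in at_top. (cmod (poly (Phi t n) (node k)))\<^sup>2 \<le> B * exp (a * t)"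
    using eventually_ge_at_top[of "0::real"]
  proof eventually_elim
    case (elim t)
    let ?f = "\<lambda>i. exp (2 * t * cos (\<theta> i)) * (cmod (poly (Phi t n) (node i)))\<^sup>2 * mass i"
    have "?f k \<le> (\<Sum>i<N. ?f i)"
      using \<open>k < N\<close> by (intro member_le_sum) auto
    also have "\<dots> \<le> (coeff_norm_sum P)\<^sup>2 * exp (2 * t * cos (\<theta> N))"
      using tilted_OPUC_sum_nodes_le[OF elim assms(1,2), of N] assms(3) by simp
    finally have "(cmod (poly (Phi t n) (node k)))\<^sup>2
        \<le> (coeff_norm_sum P)\<^sup>2 / mass k * (exp (2 * t * cos (\<theta> N)) / exp (2 * t * cos (\<theta> k)))"
      using mass_pos[of k] by (simp add: field_simps)
    also have "exp (2 * t * cos (\<theta> N)) / exp (2 * t * cos (\<theta> k)) = exp (a * t)"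
      by (simp add: a_def exp_diff[symmetric] algebra_simps)
    finally show ?case by (simp add: B_def)
  qed
  have "a < 0" using cos_theta_less[OF assms(5)] by (simp add: a_def)
  then show "((\<lambda>t. B * exp (a * t)) \<longlongrightarrow> 0) at_top"
    using tendsto_mult_right_zero[OF tendsto_exp_neg_mult_at_top] by blast
qed

lemma tilted_verblunsky_tendsto_of_gap:
  assumes "\<bar>\<theta> j\<bar> < \<bar>\<theta> (Suc j)\<bar>"
  shows "((\<lambda>t. verblunsky (exp_tilt \<mu> t) j) \<longlongrightarrow> - (\<Prod>k\<le>j. - cis (- \<theta> k))) at_top"
proof -
  define P where "P = (\<Prod>k<Suc j. [:- node k, 1:])"
  have deg_P: "degree P = Suc j" and lead_P: "lead_coeff P = 1"
    using monic_linear_factors[of "{..<Suc j}" node] by (simp_all add: P_def)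
  have P_node: "poly P (node k) = 0" if "k < Suc j" for k
    unfolding P_def poly_prod using that by (intro prod_zero) auto
  have "((\<lambda>t. poly (Phi t (Suc j) - P) 0) \<longlongrightarrow> 0) at_top"
  proof (rule poly_tendsto_0_of_nodes[OF inj_on_subset[OF inj_node subset_UNIV]])
    show "Phi t (Suc j) - P = 0 \<or> degree (Phi t (Suc j) - P) < Suc j" for t
      using monic_diff_zero_or_degree_less[OF degree_Phi deg_P lead_coeff_Phi lead_P] .
    fix k assume "k < Suc j"
    moreover have "\<bar>\<theta> k\<bar> < \<bar>\<theta> (Suc j)\<bar>"
      using abs_theta_mono[of k j] assms calculation by simp
    ultimately show "((\<lambda>t. poly (Phi t (Suc j) - P) (node k)) \<longlongrightarrow> 0) at_top"
      using tilted_OPUC_tendsto_0_at_node[OF deg_P lead_P P_node] P_node by simp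
  qed
  then have "((\<lambda>t. - cnj (poly (Phi t (Suc j)) 0)) \<longlongrightarrow> - cnj (poly P 0)) at_top"
    by (intro tendsto_intros) (simp add: LIM_zero_iff)
  moreover have "- cnj (poly P 0) = - (\<Prod>k\<le>j. - cis (- \<theta> k))"
    unfolding P_def poly_prod by (simp add: lessThan_Suc_atMost cis_cnj)
  ultimately show ?thesis by (simp add: verblunsky_def)
qed

lemma cos_theta_Suc_of_tie: "\<bar>\<theta> j\<bar> = \<bar>\<theta> (Suc j)\<bar> \<Longrightarrow> cos (\<theta> (Suc j)) = cos (\<theta> j)"
  by (metis cos_abs_real)

lemma theta_Suc_of_tie: "\<bar>\<theta> j\<bar> = \<bar>\<theta> (Suc j)\<bar> \<Longrightarrow> \<theta> (Suc j) = - \<theta> j"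
  using injD[OF inj_theta, of "Suc j" j] by (auto simp: abs_if split: if_splits)

lemma tilted_OPUC_tied_pair_bound:
  assumes tie: "\<bar>\<theta> j\<bar> = \<bar>\<theta> (Suc j)\<bar>" and "t \<ge> 0" "degree P = n" "lead_coeff P = 1"
    and P_node: "\<And>k. k < j \<Longrightarrow> poly P (node k) = 0"
  shows "mass j * (cmod (poly (Phi t n) (node j)))\<^sup>2 + mass (Suc j) * (cmod (poly (Phi t n) (node (Suc j))))\<^sup>2
      \<le> mass j * (cmod (poly P (node j)))\<^sup>2 + mass (Suc j) * (cmod (poly P (node (Suc j))))\<^sup>2
        + (coeff_norm_sum P)\<^sup>2 * exp (2 * (cos (\<theta> (Suc (Suc j))) - cos (\<theta> j)) * t)"
proof -
  define f where "f Q i = exp (2 * t * cos (\<theta> i)) * (cmod (poly Q (node i)))\<^sup>2 * mass i" for Q i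
  define X where "X Q = mass j * (cmod (poly Q (node j)))\<^sup>2 + mass (Suc j) * (cmod (poly Q (node (Suc j))))\<^sup>2"
    for Q
  have split: "(\<Sum>i<Suc (Suc j). f Q i) = (\<Sum>i<j. f Q i) + exp (2 * t * cos (\<theta> j)) * X Q" for Q
    using cos_theta_Suc_of_tie[OF tie] by (simp add: f_def X_def algebra_simps)
  have "(\<Sum>i<j. f (Phi t n) i) \<ge> 0" "(\<Sum>i<j. f P i) = 0"
    using P_node by (auto simp: f_def intro: sum_nonneg)
  then have "exp (2 * t * cos (\<theta> j)) * X (Phi t n)
      \<le> exp (2 * t * cos (\<theta> j)) * X P + (coeff_norm_sum P)\<^sup>2 * exp (2 * t * cos (\<theta> (Suc (Suc j))))"
    using tilted_OPUC_sum_nodes_le[OF assms(2-4), of "Suc (Suc j)"] split[of "Phi t n"] split[of P]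
    unfolding f_def by linarith
  then have "X (Phi t n) \<le> X P + (coeff_norm_sum P)\<^sup>2
      * (exp (2 * t * cos (\<theta> (Suc (Suc j)))) / exp (2 * t * cos (\<theta> j)))"
    by (simp add: field_simps)
  also have "exp (2 * t * cos (\<theta> (Suc (Suc j)))) / exp (2 * t * cos (\<theta> j))
      = exp (2 * (cos (\<theta> (Suc (Suc j))) - cos (\<theta> j)) * t)"
    by (simp add: exp_diff[symmetric] algebra_simps)
  finally show ?thesis by (simp add: X_def)
qed

lemma tilted_OPUC_mod_tendsto_0:
  assumes "\<And>k. k < j \<Longrightarrow> \<bar>\<theta> k\<bar> < \<bar>\<theta> j\<bar>" "j \<le> n"
  shows "((\<lambda>t. poly (Phi t n mod (\<Prod>k<j. [:- node k, 1:])) y) \<longlongrightarrow> 0) at_top"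
proof (rule poly_tendsto_0_of_nodes[OF inj_on_subset[OF inj_node subset_UNIV]])
  define q where "q = (\<Prod>k<j. [:- node k, 1:])"
  have deg_q: "degree q = j" and lead_q: "lead_coeff q = 1"
    using monic_linear_factors[of "{..<j}" node] by (simp_all add: q_def)
  then have "q \<noteq> 0" by auto
  have q_node: "poly q (node k) = 0" if "k < j" for k
    unfolding q_def poly_prod using that by (intro prod_zero) auto
  show "Phi t n mod q = 0 \<or> degree (Phi t n mod q) < j" for t
    using degree_mod_less[OF \<open>q \<noteq> 0\<close>, of "Phi t n"] deg_q by simp
  fix k assume "k < j"
  define P where "P = q * monom 1 (n - j)"
  have deg_P: "degree P = n"
    using deg_q \<open>q \<noteq> 0\<close> \<open>j \<le> n\<close> by (simp add: P_def degree_mult_eq degree_monom_eq)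
  have lead_P: "lead_coeff P = 1"
    unfolding P_def lead_coeff_mult lead_q by (simp add: degree_monom_eq)
  have "((\<lambda>t. poly (Phi t n) (node k)) \<longlongrightarrow> 0) at_top"
    using q_node assms(1) \<open>k < j\<close> by (intro tilted_OPUC_tendsto_0_at_node[OF deg_P lead_P]) (auto simp: P_def)
  moreover have "poly (Phi t n mod q) (node k) = poly (Phi t n) (node k)" for t
    using div_mult_mod_eq[of "Phi t n" q] q_node[OF \<open>k < j\<close>] by (metis add_0 mult_zero_right poly_add poly_mult)
  ultimately show "((\<lambda>t. poly (Phi t n mod q) (node k)) \<longlongrightarrow> 0) at_top" by simp
qed

lemma abs_theta_less_of_tie: "\<bar>\<theta> j\<bar> = \<bar>\<theta> (Suc j)\<bar> \<Longrightarrow> k < j \<Longrightarrow> \<bar>\<theta> k\<bar> < \<bar>\<theta> j\<bar>"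
  using abs_theta_less_Suc_Suc[of k] abs_theta_mono[of "Suc (Suc k)" "Suc j"] by simp

lemma poly_node_factors_ne_0: "j \<le> i \<Longrightarrow> poly (\<Prod>k<j. [:- node k, 1:]) (node i) \<noteq> 0"
  using injD[OF inj_node, of i] by (fastforce simp: poly_prod)

lemma tilted_OPUC_tied_root_tendsto:
  fixes x :: "real \<Rightarrow> complex"
  assumes tie: "\<bar>\<theta> j\<bar> = \<bar>\<theta> (Suc j)\<bar>"
  defines "q \<equiv> \<Prod>k<j. [:- node k, 1:]"
  defines "wp \<equiv> (cmod (poly q (node j)))\<^sup>2 * mass j"
    and "wm \<equiv> (cmod (poly q (node (Suc j))))\<^sup>2 * mass (Suc j)"
  assumes x: "\<And>t. Phi t (Suc j) = q * [:- x t, 1:] + Phi t (Suc j) mod q"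
  shows "(x \<longlongrightarrow> (of_real wp * node j + of_real wm * node (Suc j)) / of_real (wp + wm)) at_top"
proof -
  have deg_q: "degree q = j" and lead_q: "lead_coeff q = 1"
    using monic_linear_factors[of "{..<j}" node] by (simp_all add: q_def)
  have q_ne: "poly q (node j) \<noteq> 0" "poly q (node (Suc j)) \<noteq> 0"
    using poly_node_factors_ne_0 by (simp_all add: q_def)
  then have "wp > 0" "wm > 0" using mass_pos by (simp_all add: wp_def wm_def)
  define c where "c = (of_real wp * node j + of_real wm * node (Suc j)) / of_real (wp + wm)"
  define P where "P = q * [:- c, 1:]"
  have poly_P: "poly P y = poly q y * (y - c)" for y by (simp add: P_def algebra_simps)
  have "q \<noteq> 0" using lead_q by auto
  then have deg_P: "degree P = Suc j"
    unfolding P_def by (subst degree_mult_eq) (auto simp: deg_q)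
  have "lead_coeff [:- c, 1:] = 1" by simp
  then have lead_P: "lead_coeff P = 1"
    by (simp only: P_def lead_coeff_mult lead_q mult_1)
  have P_node: "poly P (node k) = 0" if "k < j" for k
    using that unfolding poly_P q_def poly_prod by (auto intro: prod_zero)
  define \<rho> where "\<rho> t y = poly (Phi t (Suc j) mod q) y" for t y
  have \<rho>_lim: "((\<lambda>t. \<rho> t y) \<longlongrightarrow> 0) at_top" for y
    unfolding \<rho>_def q_def using tilted_OPUC_mod_tendsto_0[OF abs_theta_less_of_tie[OF tie]] by simp
  have norm_poly_Phi: "cmod (poly (Phi t (Suc j)) w) = cmod (poly q w) * cmod (w - x t + \<rho> t w / poly q w)"
    if "poly q w \<noteq> 0" for w t
  proof -
    have "poly (Phi t (Suc j)) w = poly q w * (w - x t) + \<rho> t w"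
      using arg_cong[OF x[of t], of "\<lambda>p. poly p w"] by (simp add: \<rho>_def algebra_simps)
    also have "\<dots> = poly q w * (w - x t + \<rho> t w / poly q w)"
      using that by (simp add: field_simps)
    finally show ?thesis by (simp only: norm_mult)
  qed
  show ?thesis
    unfolding c_def[symmetric]
  proof (rule tendsto_weighted_barycenter[OF \<open>wp > 0\<close> \<open>wm > 0\<close> c_def])
    show "((\<lambda>t. \<rho> t (node j) / poly q (node j)) \<longlongrightarrow> 0) at_top"
      "((\<lambda>t. \<rho> t (node (Suc j)) / poly q (node (Suc j))) \<longlongrightarrow> 0) at_top"
      using tendsto_divide_zero[OF \<rho>_lim] by blast+
    have "cos (\<theta> (Suc (Suc j))) < cos (\<theta> j)"
      using cos_theta_less[OF abs_theta_less_Suc_Suc[of j]] .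
    then show "((\<lambda>t. (coeff_norm_sum P)\<^sup>2 * exp (2 * (cos (\<theta> (Suc (Suc j))) - cos (\<theta> j)) * t))
        \<longlongrightarrow> 0) at_top"
      by (intro tendsto_mult_right_zero tendsto_exp_neg_mult_at_top) simp
    show "\<forall>\<^sub>F t in at_top.
        wp * (cmod (node j - x t + \<rho> t (node j) / poly q (node j)))\<^sup>2
          + wm * (cmod (node (Suc j) - x t + \<rho> t (node (Suc j)) / poly q (node (Suc j))))\<^sup>2
        \<le> wp * (cmod (node j - c))\<^sup>2 + wm * (cmod (node (Suc j) - c))\<^sup>2
          + (coeff_norm_sum P)\<^sup>2 * exp (2 * (cos (\<theta> (Suc (Suc j))) - cos (\<theta> j)) * t)"
      using eventually_ge_at_top[of "0::real"]
    proof eventually_elim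
      case (elim t)
      from tilted_OPUC_tied_pair_bound[OF tie elim deg_P lead_P P_node] show ?case
        unfolding norm_poly_Phi[OF q_ne(1)] norm_poly_Phi[OF q_ne(2)] poly_P wp_def wm_def
        by (simp add: norm_mult power_mult_distrib mult_ac)
    qed
  qed
qed

lemma tilted_verblunsky_tendsto_of_tie:
  assumes tie: "\<bar>\<theta> j\<bar> = \<bar>\<theta> (Suc j)\<bar>"
  defines "bp \<equiv> (\<Prod>k<j. (cmod (cis (\<theta> j) - cis (\<theta> k)))\<^sup>2) * measure \<mu> {cis (\<theta> j)}"
    and "bm \<equiv> (\<Prod>k<j. (cmod (cis (- \<theta> j) - cis (\<theta> k)))\<^sup>2) * measure \<mu> {cis (- \<theta> j)}"
  shows "((\<lambda>t. verblunsky (exp_tilt \<mu> t) j) \<longlongrightarrow>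
           (\<Prod>k<j. - cis (- \<theta> k)) * (complex_of_real (bp / (bp + bm)) * cis (- \<theta> j)
              + complex_of_real (1 - bp / (bp + bm)) * cis (\<theta> j))) at_top"
proof -
  define q where "q = (\<Prod>k<j. [:- node k, 1:])"
  have poly_q: "poly q y = (\<Prod>k<j. y - node k)" for y
    unfolding q_def poly_prod by simp
  have "degree q = j" and lead_q: "lead_coeff q = 1"
    using monic_linear_factors[of "{..<j}" node] by (simp_all add: q_def)
  then have "\<forall>t. \<exists>x. Phi t (Suc j) = q * [:- x, 1:] + Phi t (Suc j) mod q"
    using monic_div_eq_linear_factor[OF _ lead_coeff_Phi lead_q] degree_Phi by metis
  then obtain x where x: "\<And>t. Phi t (Suc j) = q * [:- x t, 1:] + Phi t (Suc j) mod q"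
    by metis
  have node_Suc: "node (Suc j) = cis (- \<theta> j)" using theta_Suc_of_tie[OF tie] by simp
  have bp: "bp = (cmod (poly q (node j)))\<^sup>2 * mass j"
    and bm: "bm = (cmod (poly q (node (Suc j))))\<^sup>2 * mass (Suc j)"
    unfolding bp_def bm_def poly_q node_Suc by (simp_all add: prod_norm[symmetric] prod_power_distrib)
  have "bp > 0" "bm > 0"
    using poly_node_factors_ne_0[of j] poly_node_factors_ne_0[of j "Suc j"] mass_pos
    by (simp_all add: bp bm q_def)
  define c where "c = (of_real bp * node j + of_real bm * node (Suc j)) / of_real (bp + bm)"
  have "(x \<longlongrightarrow> c) at_top"
    using tilted_OPUC_tied_root_tendsto[OF tie x[unfolded q_def]] by (simp add: c_def bp bm q_def)
  moreover have "((\<lambda>t. poly (Phi t (Suc j) mod q) 0) \<longlongrightarrow> 0) at_top"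
    unfolding q_def using tilted_OPUC_mod_tendsto_0[OF abs_theta_less_of_tie[OF tie]] by simp
  ultimately have "((\<lambda>t. poly q 0 * (0 - x t) + poly (Phi t (Suc j) mod q) 0)
      \<longlongrightarrow> poly q 0 * (0 - c) + 0) at_top"
    by (intro tendsto_intros)
  then have "((\<lambda>t. poly (Phi t (Suc j)) 0) \<longlongrightarrow> - (poly q 0 * c)) at_top"
    by (subst x) (simp add: algebra_simps)
  then have "((\<lambda>t. verblunsky (exp_tilt \<mu> t) j) \<longlongrightarrow> cnj (poly q 0) * cnj c) at_top"
    unfolding verblunsky_def by (intro tendsto_eq_intros) auto
  moreover have "cnj (poly q 0) = (\<Prod>k<j. - cis (- \<theta> k))"
    unfolding poly_q by (simp add: cis_cnj)
  moreover have "cnj c = complex_of_real (bp / (bp + bm)) * cis (- \<theta> j)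
                        + complex_of_real (1 - bp / (bp + bm)) * cis (\<theta> j)"
  proof -
    have "1 - bp / (bp + bm) = bm / (bp + bm)" using \<open>bp > 0\<close> \<open>bm > 0\<close> by (simp add: field_simps)
    then show ?thesis
      unfolding c_def node_Suc using \<open>bp > 0\<close> \<open>bm > 0\<close>
      by (simp add: cis_cnj add_divide_distrib del: of_real_add)
  qed
  ultimately show ?thesis by simp
qed

end

theorem theorem7p1:
  fixes \<mu> :: "complex measure" and \<theta> :: "nat \<Rightarrow> real" and j :: nat
  assumes "prob_space \<mu>" and "sets \<mu> = sets borel"
    and "emeasure \<mu> (sphere 0 1) = 1"
    and "infinite (supp_meas \<mu>)"
    and "infinite {\<phi>. -pi < \<phi> \<and> \<phi> \<le> pi \<and> \<bar>\<phi>\<bar> < Theta \<mu> \<and> cis \<phi> \<in> supp_meas \<mu>}"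
    and "bij_betw \<theta> UNIV {\<phi>. -pi < \<phi> \<and> \<phi> \<le> pi \<and> \<bar>\<phi>\<bar> < Theta \<mu> \<and> cis \<phi> \<in> supp_meas \<mu>}"
    and "mono (\<lambda>k. \<bar>\<theta> k\<bar>)"
  shows "((j = 0 \<or> \<bar>\<theta> (j - 1)\<bar> < \<bar>\<theta> j\<bar>) \<and> \<bar>\<theta> j\<bar> < \<bar>\<theta> (Suc j)\<bar> \<longrightarrow>
           ((\<lambda>t. verblunsky (exp_tilt \<mu> t) j) \<longlongrightarrow> - (\<Prod>k\<le>j. - cis (- \<theta> k))) at_top)
       \<and> (\<bar>\<theta> j\<bar> = \<bar>\<theta> (Suc j)\<bar> \<longrightarrow>
           (let bp = (\<Prod>k<j. (cmod (cis (\<theta> j) - cis (\<theta> k)))\<^sup>2) * measure \<mu> {cis (\<theta> j)};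
                bm = (\<Prod>k<j. (cmod (cis (- \<theta> j) - cis (\<theta> k)))\<^sup>2) * measure \<mu> {cis (- \<theta> j)};
                a = bp / (bp + bm)
            in ((\<lambda>t. verblunsky (exp_tilt \<mu> t) j) \<longlongrightarrow>
                  (\<Prod>k<j. - cis (- \<theta> k)) * (complex_of_real a * cis (- \<theta> j)
                     + complex_of_real (1 - a) * cis (\<theta> j))) at_top))"
proof -
  interpret inner_support_enumeration \<mu> \<theta>
    by (rule inner_support_enumeration.intro[OF assms(1-3,6,7)])
  show ?thesis
    using tilted_verblunsky_tendsto_of_gap tilted_verblunsky_tendsto_of_tie[of j] by (auto simp: Let_def)
qed

end
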